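(* Let $G$ be a compact connected Lie group with $n$-dimensional Lie algebra $\mathfrak g$, $\langle\cdot,\cdot\rangle$ an $\mathrm{Ad}_G$-invariant scalar product on $\mathfrak g$, $\mathbb I:\mathfrak g\to\mathfrak g$ symmetric positive definite, and $\epsilon$ a real parameter. Let $E_1,\dots,E_n$ be an orthonormal basis of $\mathfrak g$ and $\mathcal O_{E_i}$ the adjoint orbit of $E_i$. Fix $1\le k<n$. On $$\mathcal M=\{(\omega,e_1,\dots,e_n)\in\mathfrak g\times\mathcal O_{E_1}\times\cdots\times\mathcal O_{E_n}:\ \langle e_i,e_j\rangle=\delta_{ij}\}$$ consider the system $$\dot m=[m,\omega]+\sum_{i=1}^k\lambda^ie_i,\quad m=\mathbb I\omega,\qquad \dot e_i=\epsilon[e_i,\omega],\ i=1,\dots,n,$$ with $\lambda^i=-\sum_{j=1}^k\langle e_j,\mathbb I^{-1}[m,\omega]\rangle\mathbb A^{ij}$, where $(\mathbb A^{ij})$ is the inverse of $\mathbb A_{ij}=\langle e_i,\mathbb I^{-1}e_j\rangle$, $i,j=1,\dots,k$. Let $\mathcal H=\mathrm{span}\{e_1,\dots,e_k\}$, $\mathcal D=\mathrm{span}\{e_{k+1},\dots,e_n\}$, let $\mathrm{pr}_{\mathcal H},\mathrm{pr}_{\mathcal D}$ be the orthogonal projections onto them, and define the momentum $\mathbf m=\mathrm{pr}_{\mathcal D}\mathbb I\omega+\mathrm{pr}_{\mathcal H}\omega=\mathbf J\omega$, $\mathbf J=\mathrm{pr}_{\mathcal D}\mathbb I+\mathrm{pr}_{\mathcal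 H}$. Then along trajectories, $\omega=\mathbf J^{-1}\mathbf m$ and $(\mathbf m,e_{k+1},\dots,e_n)$ satisfies the closed system on $$\mathcal N=\{(\mathbf m,e_{k+1},\dots,e_n)\in\mathfrak g\times\mathcal O_{E_{k+1}}\times\cdots\times\mathcal O_{E_n}:\ \langle e_i,e_j\rangle=\delta_{ij}\}$$ given by $$\dot{\mathbf m}=\epsilon[\mathbf m,\omega]+(1-\epsilon)\,\mathrm{pr}_{\mathcal D}[\mathbb I\omega,\omega],\qquad \dot e_i=\epsilon[e_i,\omega],\quad i=k+1,\dots,n.$$
   Context: Here $\mathrm{pr}_{\mathcal H}=\mathbb E-\mathrm{pr}_{\mathcal D}$ where $\mathbb E$ is the identity, so both projections depend only on $e_{k+1},\dots,e_n$, and $\mathbf J$ is invertible. *)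

theory Defs
  imports "HOL-Analysis.Analysis"
begin

definition inv_lie_algebra :: "('g::euclidean_space \<Rightarrow> 'g \<Rightarrow> 'g) \<Rightarrow> bool" where
  "inv_lie_algebra br \<longleftrightarrow>
     bilinear br \<and>
     (\<forall>x y. br x y = - br y x) \<and>
     (\<forall>x y z. br x (br y z) + br y (br z x) + br z (br x y) = 0) \<and>
     (\<forall>x y z. inner (br x y) z = inner x (br y z))"

definition exp_ad :: "('g::euclidean_space \<Rightarrow> 'g \<Rightarrow> 'g) \<Rightarrow> 'g \<Rightarrow> 'g \<Rightarrow> 'g" where
  "exp_ad br X Y = (\<Sum>j. (1 / fact j) *\<^sub>R ((br X) ^^ j) Y)"

text \<open>Adjoint orbit of E under the connected group: Ad(G) is generated by the
exp(ad X), X in the Lie algebra.\<close>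
definition adj_orbit :: "('g::euclidean_space \<Rightarrow> 'g \<Rightarrow> 'g) \<Rightarrow> 'g \<Rightarrow> 'g set" where
  "adj_orbit br E = {foldr (exp_ad br) Xs E | Xs. True}"

definition orth_proj :: "'g::euclidean_space set \<Rightarrow> 'g \<Rightarrow> 'g" where
  "orth_proj S x = (THE y. y \<in> S \<and> (\<forall>z\<in>S. inner (x - y) z = 0))"

definition mat_inv_k :: "nat \<Rightarrow> (nat \<Rightarrow> nat \<Rightarrow> real) \<Rightarrow> (nat \<Rightarrow> nat \<Rightarrow> real)" where
  "mat_inv_k k A = (THE B. (\<forall>i\<in>{1..k}. \<forall>j\<in>{1..k}.
        (\<Sum>l=1..k. A i l * B l j) = (if i = j then 1 else 0)) \<and>
      (\<forall>i j. \<not> (i \<in> {1..k} \<and> j \<in> {1..k}) \<longrightarrow> B i j = 0))"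

end

theory Submission
  imports Defs
begin

text \<open>
  Write P and Q = id - P for the orthogonal projections onto D and H; both are explicit
  expansions in the moving orthonormal frame. Since e_i' = eps [e_i, omega], ad-invariance
  shows that the frame expansion of a curve a has derivative P (a' - eps [a, omega]) + eps [P a, omega].
  Apply this to m = I omega on D and to omega on H. The multiplier terms lie in H, so they drop
  out of the D-part, which becomes (1 - eps) P [m, omega] + eps [P m, omega]. They are chosen, via
  the inverse of the Gram matrix <e_i, I^-1 e_j> (invertible since I is positive definite),
  exactly so that omega' = I^-1 m' is orthogonal to H; so the H-part is eps [Q omega, omega].
  Finally J is injective: J x = 0 forces Q x = 0 and P (I x) = 0, hence <I x, x> = 0.
\<close>

definition orthonormal_on :: "(nat \<Rightarrow> 'g::real_inner) \<Rightarrow> nat set \<Rightarrow> bool" where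
  "orthonormal_on f S \<longleftrightarrow> (\<forall>i\<in>S. \<forall>j\<in>S. inner (f i) (f j) = (if i = j then 1 else 0))"

definition frame_proj :: "(nat \<Rightarrow> 'g::real_inner) \<Rightarrow> nat set \<Rightarrow> 'g \<Rightarrow> 'g" where
  "frame_proj f S x = (\<Sum>i\<in>S. inner x (f i) *\<^sub>R f i)"

lemma orthonormal_on_subset: "orthonormal_on f S \<Longrightarrow> S' \<subseteq> S \<Longrightarrow> orthonormal_on f S'"
  unfolding orthonormal_on_def by blast

lemma inner_sum_orthonormal:
  assumes "orthonormal_on f U" "S \<subseteq> U" "finite S" "j \<in> U"
  shows "inner (\<Sum>i\<in>S. c i *\<^sub>R f i) (f j) = (if j \<in> S then c j else 0)"
proof -
  have "inner (\<Sum>i\<in>S. c i *\<^sub>R f i) (f j) = (\<Sum>i\<in>S. if i = j then c i else 0)"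
    unfolding inner_sum_left inner_scaleR_left
    by (rule sum.cong) (use assms in \<open>auto simp: orthonormal_on_def\<close>)
  with \<open>finite S\<close> show ?thesis by (simp add: sum.delta')
qed

lemma inner_frame_proj:
  assumes "orthonormal_on f U" "S \<subseteq> U" "finite S" "j \<in> U"
  shows "inner (frame_proj f S x) (f j) = (if j \<in> S then inner x (f j) else 0)"
  unfolding frame_proj_def by (rule inner_sum_orthonormal[OF assms])

lemma linear_frame_proj: "linear (frame_proj f S)"
  unfolding frame_proj_def linear_iff
  by (simp add: inner_add_left scaleR_add_left sum.distrib scaleR_sum_right)

lemma frame_proj_eq_0:
  assumes "\<forall>i\<in>S. inner x (f i) = 0"
  shows "frame_proj f S x = 0"
  using assms unfolding frame_proj_def by simp

lemma inner_diff_frame_proj: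
  assumes "orthonormal_on f S" "finite S" "j \<in> S"
  shows "inner (x - frame_proj f S x) (f j) = 0"
  using inner_frame_proj[OF assms(1) order_refl assms(2,3)] assms(3)
  by (simp add: inner_diff_left)

lemma orth_proj_span_orthonormal:
  assumes on: "orthonormal_on f S" and fin: "finite S"
  shows "orth_proj (span (f ` S)) x = frame_proj f S x"
proof -
  let ?y = "frame_proj f S x"
  have orth: "inner (x - ?y) z = 0" if "z \<in> span (f ` S)" for z
    using orthogonal_to_span[OF that] inner_diff_frame_proj[OF on fin]
    by (auto simp: orthogonal_def)
  have y_span: "?y \<in> span (f ` S)"
    unfolding frame_proj_def by (intro span_sum span_scale span_base) auto
  show ?thesis unfolding orth_proj_def
  proof (rule the_equality)
    show "?y \<in> span (f ` S) \<and> (\<forall>z\<in>span (f ` S). inner (x - ?y) z = 0)"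
      using y_span orth by blast
  next
    fix y assume y: "y \<in> span (f ` S) \<and> (\<forall>z\<in>span (f ` S). inner (x - y) z = 0)"
    then have d_span: "y - ?y \<in> span (f ` S)" using y_span span_diff by blast
    have "inner (y - ?y) (y - ?y) = inner (x - ?y) (y - ?y) - inner (x - y) (y - ?y)"
      by (simp add: inner_diff_left)
    also have "\<dots> = 0" using y orth d_span by simp
    finally show "y = ?y" by simp
  qed
qed

lemma frame_proj_orthonormal_basis:
  fixes f :: "nat \<Rightarrow> 'g::euclidean_space"
  assumes on: "orthonormal_on f I" and fin: "finite I" and card: "card I = DIM('g)"
  shows "frame_proj f I x = x"
proof -
  have inj: "inj_on f I"
    using on unfolding orthonormal_on_def inj_on_def by (metis one_neq_zero)
  have "pairwise orthogonal (f ` I)"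
    using on unfolding orthonormal_on_def pairwise_def orthogonal_def by auto
  moreover have "0 \<notin> f ` I"
    using on unfolding orthonormal_on_def by (metis (no_types, lifting) imageE inner_zero_left zero_neq_one)
  ultimately have "independent (f ` I)" by (rule pairwise_orthogonal_independent)
  then have "UNIV \<subseteq> span (f ` I)"
    using card_ge_dim_independent[of "f ` I" UNIV] card card_image[OF inj] by auto
  then have "orthogonal (x - frame_proj f I x) (x - frame_proj f I x)"
    by (rule orthogonal_to_span[OF subsetD])
      (use inner_diff_frame_proj[OF on fin] in \<open>auto simp: orthogonal_def\<close>)
  then show ?thesis by (simp add: orthogonal_def)
qed

lemma orth_proj_complement:
  fixes f :: "nat \<Rightarrow> 'g::euclidean_space"
  assumes on: "orthonormal_on f I" and fin: "finite I" and card: "card I = DIM('g)"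
    and S: "S \<subseteq> I"
  shows "x - orth_proj (span (f ` S)) x = frame_proj f (I - S) x"
proof -
  have "x = frame_proj f (I - S) x + frame_proj f S x"
    using frame_proj_orthonormal_basis[OF on fin card, of x] sum.subset_diff[OF S fin]
    unfolding frame_proj_def by metis
  then show ?thesis
    using orth_proj_span_orthonormal[OF orthonormal_on_subset[OF on S] finite_subset[OF S fin]]
    by (metis add_diff_cancel)
qed

lemma positive_definite_frame_eq_0:
  assumes pos: "\<forall>x. x \<noteq> 0 \<longrightarrow> inner (L x) x > 0"
    and orth: "\<forall>i\<in>S. inner (L v) (f i) = 0" and v: "v = (\<Sum>i\<in>S. c i *\<^sub>R f i)"
  shows "v = 0"
proof -
  have "inner (L v) v = (\<Sum>i\<in>S. c i * inner (L v) (f i))"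
    by (subst (2) v) (simp add: inner_sum_right)
  also have "\<dots> = 0" using orth by simp
  finally show ?thesis using pos by (metis less_irrefl)
qed

lemma positive_definite_bij:
  assumes lin: "linear L" and pos: "\<forall>x. x \<noteq> 0 \<longrightarrow> inner (L x) x > 0"
  shows "bij (L :: 'g::euclidean_space \<Rightarrow> 'g)"
proof -
  have "inj L"
    using pos by (auto simp: linear_injective_0[OF lin])
  then show ?thesis
    using linear_injective_imp_surjective[OF lin] by (simp add: bij_def)
qed

lemma positive_definite_inv:
  fixes L :: "'g::euclidean_space \<Rightarrow> 'g"
  assumes lin: "linear L" and pos: "\<forall>x. x \<noteq> 0 \<longrightarrow> inner (L x) x > 0"
  shows "\<forall>x. x \<noteq> 0 \<longrightarrow> inner (inv L x) x > 0"
proof (intro allI impI)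
  fix x :: 'g assume "x \<noteq> 0"
  have L_inv: "L (inv L x) = x"
    using positive_definite_bij[OF lin pos] by (simp add: bij_def surj_f_inv_f)
  with \<open>x \<noteq> 0\<close> have "inv L x \<noteq> 0" using linear_0[OF lin] by metis
  then show "inner (inv L x) x > 0"
    using pos L_inv by (metis inner_commute)
qed

lemma bij_momentum_map:
  fixes L :: "'g::euclidean_space \<Rightarrow> 'g"
  assumes lin: "linear L" and pos: "\<forall>x. x \<noteq> 0 \<longrightarrow> inner (L x) x > 0"
    and on: "orthonormal_on f S" and fin: "finite S"
  shows "bij (\<lambda>x. orth_proj (span (f ` S)) (L x) + (x - orth_proj (span (f ` S)) x))"
proof -
  let ?P = "frame_proj f S"
  let ?J = "\<lambda>x. ?P (L x) + (x - ?P x)"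
  have lin_J: "linear ?J"
    by (intro linear_compose_add linear_compose_sub linear_id[unfolded id_def]
        linear_frame_proj linear_compose[OF lin linear_frame_proj, unfolded o_def])
  have "inj ?J"
  proof (rule linear_injective_0[OF lin_J, THEN iffD2], intro allI impI)
    fix x assume J0: "?J x = 0"
    have Lx_orth: "\<forall>i\<in>S. inner (L x) (f i) = 0"
    proof
      fix i assume "i \<in> S"
      have "inner (?J x) (f i) = inner (L x) (f i)"
        using inner_frame_proj[OF on order_refl fin \<open>i \<in> S\<close>] inner_diff_frame_proj[OF on fin \<open>i \<in> S\<close>]
          \<open>i \<in> S\<close> by (simp add: inner_add_left)
      with J0 show "inner (L x) (f i) = 0" by simp
    qed
    then have "x = ?P x"
      using J0 frame_proj_eq_0[OF Lx_orth] by simp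
    then show "x = 0"
      unfolding frame_proj_def by (rule positive_definite_frame_eq_0[OF pos Lx_orth])
  qed
  then have "bij ?J"
    using linear_injective_imp_surjective[OF lin_J] by (simp add: bij_def)
  then show ?thesis
    by (simp only: orth_proj_span_orthonormal[OF on fin])
qed

lemma mat_inv_k_right_inverse:
  assumes inj: "\<And>x. \<forall>i\<in>{1..k}. (\<Sum>l=1..k. A i l * x l) = 0 \<Longrightarrow> \<forall>l\<in>{1..k}. x l = 0"
    and surj: "\<And>y. \<exists>x. \<forall>i\<in>{1..k}. (\<Sum>l=1..k. A i l * x l) = y i"
  shows "\<forall>i\<in>{1..k}. \<forall>j\<in>{1..k}. (\<Sum>l=1..k. A i l * mat_inv_k k A l j) = (if i = j then 1 else 0)"
proof -
  define inverse where "inverse B \<longleftrightarrow> (\<forall>i\<in>{1..k}. \<forall>j\<in>{1..k}.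
        (\<Sum>l=1..k. A i l * B l j) = (if i = j then 1 else (0::real))) \<and>
      (\<forall>i j. \<not> (i \<in> {1..k} \<and> j \<in> {1..k}) \<longrightarrow> B i j = 0)" for B
  have "\<forall>j. \<exists>x. \<forall>i\<in>{1..k}. (\<Sum>l=1..k. A i l * x l) = (if i = j then 1 else 0)"
    by (intro allI surj)
  then obtain X where X: "\<And>j. \<forall>i\<in>{1..k}. (\<Sum>l=1..k. A i l * X j l) = (if i = j then 1 else 0)"
    by metis
  have inverse_X: "inverse (\<lambda>l j. if l \<in> {1..k} \<and> j \<in> {1..k} then X j l else 0)"
    unfolding inverse_def
  proof (intro conjI ballI allI impI)
    fix i j assume "i \<in> {1..k}" "j \<in> {1..k}"
    show "(\<Sum>l=1..k. A i l * (if l \<in> {1..k} \<and> j \<in> {1..k} then X j l else 0)) =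
        (if i = j then 1 else 0)"
    proof -
      have "(\<Sum>l=1..k. A i l * (if l \<in> {1..k} \<and> j \<in> {1..k} then X j l else 0)) =
          (\<Sum>l=1..k. A i l * X j l)"
        using \<open>j \<in> {1..k}\<close> by (intro sum.cong) auto
      with X[of j] \<open>i \<in> {1..k}\<close> show ?thesis by simp
    qed
  qed auto
  have inverse_unique: "B = B'" if "inverse B" "inverse B'" for B B'
  proof (intro ext)
    fix l j
    show "B l j = B' l j"
    proof (cases "j \<in> {1..k}")
      case True
      have "\<forall>i\<in>{1..k}. (\<Sum>l=1..k. A i l * (B l j - B' l j)) = 0"
        using that True unfolding inverse_def by (simp add: right_diff_distrib sum_subtractf)
      with inj[of "\<lambda>l. B l j - B' l j"] that show ?thesis
        unfolding inverse_def by (cases "l \<in> {1..k}") auto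
    next
      case False with that show ?thesis unfolding inverse_def by simp
    qed
  qed
  have "inverse (THE B. inverse B)"
    by (rule theI[where P = inverse, OF inverse_X inverse_unique[OF _ inverse_X]])
  moreover have "mat_inv_k k A = (THE B. inverse B)"
    unfolding mat_inv_k_def inverse_def ..
  ultimately have "inverse (mat_inv_k k A)" by simp
  then show ?thesis unfolding inverse_def by (rule conjunct1)
qed

lemma inner_linear_frame_sum:
  assumes "linear L"
  shows "inner (f i) (L (\<Sum>l\<in>S. c l *\<^sub>R f l)) = (\<Sum>l\<in>S. inner (f i) (L (f l)) * c l)"
  by (simp add: linear_sum[OF assms] linear_scale[OF assms] inner_sum_right mult.commute)

lemma gram_kernel_trivial:
  assumes lin: "linear L" and pos: "\<forall>x. x \<noteq> 0 \<longrightarrow> inner (L x) x > 0"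
    and on: "orthonormal_on f {1..k}"
    and x: "\<forall>i\<in>{1..k}. (\<Sum>l=1..k. inner (f i) (L (f l)) * x l) = 0"
  shows "\<forall>l\<in>{1..k}. x l = 0"
proof -
  define v where "v = (\<Sum>l=1..k. x l *\<^sub>R f l)"
  have "inner (L v) (f i) = 0" if "i \<in> {1..k}" for i
    using x that by (simp add: v_def inner_linear_frame_sum[OF lin] inner_commute[of _ "f i"])
  then have "v = 0" by (intro positive_definite_frame_eq_0[OF pos _ v_def]) blast
  then show ?thesis
    using inner_sum_orthonormal[OF on order_refl, of _ x] unfolding v_def by simp
qed

lemma gram_surjective:
  fixes f :: "nat \<Rightarrow> 'g::euclidean_space"
  assumes lin: "linear L" and pos: "\<forall>x. x \<noteq> 0 \<longrightarrow> inner (L x) x > 0"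
    and on: "orthonormal_on f {1..k}"
  shows "\<exists>x. \<forall>i\<in>{1..k}. (\<Sum>l=1..k. inner (f i) (L (f l)) * x l) = y i"
proof -
  let ?Q = "frame_proj f {1..k}"
  define \<Phi> where "\<Phi> x = ?Q (L (?Q x)) + (x - ?Q x)" for x
  have \<Phi>_inner: "inner (\<Phi> x) (f i) = inner (f i) (L (?Q x))" if "i \<in> {1..k}" for x i
    unfolding \<Phi>_def inner_add_left inner_frame_proj[OF on order_refl finite_atLeastAtMost that]
      inner_diff_frame_proj[OF on finite_atLeastAtMost that] using that by (simp add: inner_commute)
  have lin_\<Phi>: "linear \<Phi>"
    unfolding \<Phi>_def[abs_def]
    by (intro linear_compose_add linear_compose_sub linear_id[unfolded id_def] linear_frame_proj
        linear_compose[OF linear_compose[OF linear_frame_proj lin] linear_frame_proj, unfolded o_def])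
  have "inj \<Phi>"
  proof (rule linear_injective_0[OF lin_\<Phi>, THEN iffD2], intro allI impI)
    fix x assume \<Phi>0: "\<Phi> x = 0"
    have "inner (L (?Q x)) (f i) = 0" if "i \<in> {1..k}" for i
      using \<Phi>_inner[OF that, of x] \<Phi>0 by (simp add: inner_commute)
    then have "?Q x = 0"
      by (intro positive_definite_frame_eq_0[OF pos]) (auto simp: frame_proj_def)
    then show "x = 0"
      using \<Phi>0 by (simp add: \<Phi>_def linear_0[OF lin] linear_0[OF linear_frame_proj])
  qed
  then have "surj \<Phi>" by (rule linear_injective_imp_surjective[OF lin_\<Phi> _ refl])
  then obtain x where x: "(\<Sum>i=1..k. y i *\<^sub>R f i) = \<Phi> x" by (rule surjE)
  have "(\<Sum>l=1..k. inner (f i) (L (f l)) * inner x (f l)) = y i" if "i \<in> {1..k}" for i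
  proof -
    have "(\<Sum>l=1..k. inner (f i) (L (f l)) * inner x (f l)) = inner (\<Phi> x) (f i)"
      unfolding \<Phi>_inner[OF that] frame_proj_def by (rule inner_linear_frame_sum[OF lin, symmetric])
    also have "\<dots> = y i"
      unfolding x[symmetric] using inner_sum_orthonormal[OF on order_refl _ that, of y] that by simp
    finally show ?thesis .
  qed
  then show ?thesis by (intro exI[of _ "\<lambda>l. inner x (f l)"]) blast
qed

lemma mat_inv_k_gram:
  fixes f :: "nat \<Rightarrow> 'g::euclidean_space"
  assumes "linear L" "\<forall>x. x \<noteq> 0 \<longrightarrow> inner (L x) x > 0" "orthonormal_on f {1..k}"
  shows "\<forall>i\<in>{1..k}. \<forall>j\<in>{1..k}. (\<Sum>l=1..k. inner (f i) (L (f l)) *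
           mat_inv_k k (\<lambda>a b. inner (f a) (L (f b))) l j) = (if i = j then 1 else 0)"
  by (rule mat_inv_k_right_inverse[where A = "\<lambda>a b. inner (f a) (L (f b))",
        OF gram_kernel_trivial[OF assms] gram_surjective[OF assms]])

lemma inv_lie_algebra_bracket_self:
  assumes "inv_lie_algebra br"
  shows "br x x = 0"
proof -
  have "br x x = - br x x" using assms unfolding inv_lie_algebra_def by blast
  then have "br x x + br x x = 0" by (metis add.right_inverse)
  then show ?thesis by (simp flip: scaleR_2)
qed

lemma inv_lie_algebra_inner_bracket:
  assumes "inv_lie_algebra br"
  shows "inner a (br x y) = - inner (br a y) x"
proof -
  have "inner (br a y) x = inner a (br y x)" and "br y x = - br x y"
    using assms unfolding inv_lie_algebra_def by blast+
  then show ?thesis by simp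
qed

lemma linear_bracket_left: "inv_lie_algebra br \<Longrightarrow> linear (\<lambda>x. br x y)"
  unfolding inv_lie_algebra_def bilinear_def by blast

lemma has_vector_derivative_inner_scaleR:
  fixes a b :: "real \<Rightarrow> 'g::real_inner"
  assumes "(a has_vector_derivative a') (at t)" "(b has_vector_derivative b') (at t)"
  shows "((\<lambda>s. inner (a s) (b s) *\<^sub>R b s) has_vector_derivative
           (inner (a t) b' + inner a' (b t)) *\<^sub>R b t + inner (a t) (b t) *\<^sub>R b') (at t)"
proof -
  have "((\<lambda>s. inner (a s) (b s)) has_vector_derivative inner (a t) b' + inner a' (b t)) (at t)"
    by (rule bounded_bilinear.has_vector_derivative[OF bounded_bilinear_inner assms])
  from bounded_bilinear.has_vector_derivative[OF bounded_bilinear_scaleR this assms(2)]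
  show ?thesis by (simp add: add.commute)
qed

lemma has_vector_derivative_rotating_frame_proj:
  fixes a :: "real \<Rightarrow> 'g::euclidean_space"
  assumes lie: "inv_lie_algebra br"
    and da: "(a has_vector_derivative a') (at t)"
    and de: "\<forall>i\<in>S. (e i has_vector_derivative \<epsilon> *\<^sub>R br (e i t) w) (at t)"
  shows "((\<lambda>s. frame_proj (\<lambda>i. e i s) S (a s)) has_vector_derivative
           frame_proj (\<lambda>i. e i t) S (a' - \<epsilon> *\<^sub>R br (a t) w) +
           \<epsilon> *\<^sub>R br (frame_proj (\<lambda>i. e i t) S (a t)) w) (at t)"
proof -
  have "((\<lambda>s. frame_proj (\<lambda>i. e i s) S (a s)) has_vector_derivative
          (\<Sum>i\<in>S. (inner (a t) (\<epsilon> *\<^sub>R br (e i t) w) + inner a' (e i t)) *\<^sub>R e i t +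
                   inner (a t) (e i t) *\<^sub>R \<epsilon> *\<^sub>R br (e i t) w)) (at t)"
    unfolding frame_proj_def
    by (intro has_vector_derivative_sum ballI has_vector_derivative_inner_scaleR da) (use de in blast)
  also have "(\<Sum>i\<in>S. (inner (a t) (\<epsilon> *\<^sub>R br (e i t) w) + inner a' (e i t)) *\<^sub>R e i t +
                   inner (a t) (e i t) *\<^sub>R \<epsilon> *\<^sub>R br (e i t) w) =
      (\<Sum>i\<in>S. inner (a' - \<epsilon> *\<^sub>R br (a t) w) (e i t) *\<^sub>R e i t) +
      \<epsilon> *\<^sub>R (\<Sum>i\<in>S. inner (a t) (e i t) *\<^sub>R br (e i t) w)"
    by (simp add: sum.distrib sum_subtractf scaleR_sum_right inv_lie_algebra_inner_bracket[OF lie]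
        algebra_simps)
  also have "(\<Sum>i\<in>S. inner (a t) (e i t) *\<^sub>R br (e i t) w) = br (frame_proj (\<lambda>i. e i t) S (a t)) w"
    unfolding frame_proj_def
    by (simp add: linear_sum[OF linear_bracket_left[OF lie]] linear_scale[OF linear_bracket_left[OF lie]])
  finally show ?thesis by (simp add: frame_proj_def)
qed

lemma inner_constraint_multipliers:
  fixes f :: "nat \<Rightarrow> 'g::real_inner"
  assumes lin: "linear L"
    and B: "\<forall>i\<in>{1..k}. \<forall>j\<in>{1..k}. (\<Sum>l=1..k. inner (f i) (L (f l)) * B l j) = (if i = j then 1 else 0)"
    and j: "j \<in> {1..k}"
  shows "inner (f j) (L (x + (\<Sum>i=1..k. (- (\<Sum>l=1..k. inner (f l) (L x) * B i l)) *\<^sub>R f i))) = 0"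
proof -
  let ?c = "\<lambda>l. inner (f l) (L x)"
  have "inner (f j) (L (\<Sum>i=1..k. (- (\<Sum>l=1..k. ?c l * B i l)) *\<^sub>R f i)) =
      (\<Sum>i=1..k. inner (f j) (L (f i)) * - (\<Sum>l=1..k. ?c l * B i l))"
    by (rule inner_linear_frame_sum[OF lin])
  also have "\<dots> = - (\<Sum>i=1..k. \<Sum>l=1..k. ?c l * (inner (f j) (L (f i)) * B i l))"
    by (simp add: sum_distrib_left sum_negf mult_ac)
  also have "\<dots> = - (\<Sum>l=1..k. ?c l * (\<Sum>i=1..k. inner (f j) (L (f i)) * B i l))"
    by (subst sum.swap) (simp add: sum_distrib_left)
  also have "\<dots> = - (\<Sum>l=1..k. ?c l * (if j = l then 1 else 0))"
    using B j by simp
  also have "\<dots> = - ?c j"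
    using j by (simp add: if_distrib cong: if_cong)
  finally show ?thesis
    by (simp add: linear_add[OF lin] inner_add_right)
qed

lemma has_vector_derivative_split_momentum:
  fixes m w :: "real \<Rightarrow> 'g::euclidean_space"
  assumes lie: "inv_lie_algebra br"
    and dm: "(m has_vector_derivative m') (at t)" and dw: "(w has_vector_derivative w') (at t)"
    and de: "\<forall>i\<in>D \<union> H. (e i has_vector_derivative \<epsilon> *\<^sub>R br (e i t) (w t)) (at t)"
    and m'_D: "\<forall>j\<in>D. inner (m' - br (m t) (w t)) (e j t) = 0"
    and w'_H: "\<forall>j\<in>H. inner w' (e j t) = 0"
  shows "((\<lambda>s. frame_proj (\<lambda>i. e i s) D (m s) + frame_proj (\<lambda>i. e i s) H (w s))
           has_vector_derivative
           \<epsilon> *\<^sub>R br (frame_proj (\<lambda>i. e i t) D (m t) + frame_proj (\<lambda>i. e i t) H (w t)) (w t) +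
           (1 - \<epsilon>) *\<^sub>R frame_proj (\<lambda>i. e i t) D (br (m t) (w t))) (at t)"
proof -
  let ?P = "frame_proj (\<lambda>i. e i t) D" and ?Q = "frame_proj (\<lambda>i. e i t) H"
  have "((\<lambda>s. frame_proj (\<lambda>i. e i s) D (m s) + frame_proj (\<lambda>i. e i s) H (w s))
      has_vector_derivative
        ?P (m' - \<epsilon> *\<^sub>R br (m t) (w t)) + \<epsilon> *\<^sub>R br (?P (m t)) (w t) +
        (?Q (w' - \<epsilon> *\<^sub>R br (w t) (w t)) + \<epsilon> *\<^sub>R br (?Q (w t)) (w t))) (at t)"
    using de by (intro has_vector_derivative_add has_vector_derivative_rotating_frame_proj[OF lie] dm dw) auto
  also have "?Q (w' - \<epsilon> *\<^sub>R br (w t) (w t)) = 0"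
    using w'_H by (simp add: inv_lie_algebra_bracket_self[OF lie] frame_proj_eq_0)
  also have "m' - \<epsilon> *\<^sub>R br (m t) (w t) = (1 - \<epsilon>) *\<^sub>R br (m t) (w t) + (m' - br (m t) (w t))"
    by (simp add: algebra_simps)
  also have "?P \<dots> = (1 - \<epsilon>) *\<^sub>R ?P (br (m t) (w t))"
    using m'_D by (simp add: linear_add[OF linear_frame_proj] linear_scale[OF linear_frame_proj] frame_proj_eq_0)
  finally show ?thesis
    by (simp add: linear_add[OF linear_bracket_left[OF lie]] algebra_simps)
qed

lemma momentum_has_vector_derivative:
  fixes br :: "'g::euclidean_space \<Rightarrow> 'g \<Rightarrow> 'g"
    and II :: "'g \<Rightarrow> 'g" and \<omega> :: "real \<Rightarrow> 'g" and e :: "nat \<Rightarrow> real \<Rightarrow> 'g"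
  assumes lie: "inv_lie_algebra br"
    and II_lin: "linear II" and II_pos: "\<forall>x. x \<noteq> 0 \<longrightarrow> inner (II x) x > 0"
    and k: "k \<le> DIM('g)" and T: "open T" and t: "t \<in> T"
    and on: "\<forall>s\<in>T. orthonormal_on (\<lambda>i. e i s) {1..DIM('g)}"
    and dm: "((\<lambda>s. II (\<omega> s)) has_vector_derivative
               (br (II (\<omega> t)) (\<omega> t) +
                (\<Sum>i=1..k. (- (\<Sum>j=1..k.
                    inner (e j t) (inv II (br (II (\<omega> t)) (\<omega> t))) *
                    mat_inv_k k (\<lambda>a b. inner (e a t) (inv II (e b t))) i j)) *\<^sub>R e i t))) (at t)"
    and de: "\<forall>i\<in>{1..DIM('g)}. (e i has_vector_derivative (\<epsilon> *\<^sub>R br (e i t) (\<omega> t))) (at t)"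
  shows "((\<lambda>s. orth_proj (span ((\<lambda>i. e i s) ` {k+1..DIM('g)})) (II (\<omega> s)) +
              (\<omega> s - orth_proj (span ((\<lambda>i. e i s) ` {k+1..DIM('g)})) (\<omega> s)))
          has_vector_derivative
          \<epsilon> *\<^sub>R br (orth_proj (span ((\<lambda>i. e i t) ` {k+1..DIM('g)})) (II (\<omega> t)) +
                     (\<omega> t - orth_proj (span ((\<lambda>i. e i t) ` {k+1..DIM('g)})) (\<omega> t))) (\<omega> t) +
          (1 - \<epsilon>) *\<^sub>R orth_proj (span ((\<lambda>i. e i t) ` {k+1..DIM('g)})) (br (II (\<omega> t)) (\<omega> t))) (at t)"
proof -
  define D where "D = {k+1..DIM('g)}"
  define H where "H = {1..DIM('g)} - D"
  have H_eq: "H = {1..k}" using k by (auto simp: H_def D_def)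
  have D_sub: "D \<subseteq> {1..DIM('g)}" by (auto simp: D_def)
  have proj_D: "orth_proj (span ((\<lambda>i. e i s) ` D)) x = frame_proj (\<lambda>i. e i s) D x" if "s \<in> T" for s x
    using orth_proj_span_orthonormal[OF orthonormal_on_subset[OF on[rule_format, OF that] D_sub]]
    by (simp add: D_def)
  have proj_H: "x - orth_proj (span ((\<lambda>i. e i s) ` D)) x = frame_proj (\<lambda>i. e i s) H x" if "s \<in> T" for s x
    unfolding H_def by (rule orth_proj_complement[OF on[rule_format, OF that] _ _ D_sub]) simp_all
  define f where "f i = e i t" for i
  define mw where "mw = br (II (\<omega> t)) (\<omega> t)"
  define lam where "lam i = - (\<Sum>j=1..k. inner (f j) (inv II mw) *
      mat_inv_k k (\<lambda>a b. inner (f a) (inv II (f b))) i j)" for i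
  define M where "M = mw + (\<Sum>i=1..k. lam i *\<^sub>R f i)"
  have on_t: "orthonormal_on f {1..DIM('g)}" using on t by (simp add: f_def[abs_def])
  have bij_II: "bij II" by (rule positive_definite_bij[OF II_lin II_pos])
  have bl_inv: "bounded_linear (inv II)"
    by (rule inj_linear_imp_inv_bounded_linear[OF linear_conv_bounded_linear[THEN iffD1, OF II_lin]
          bij_is_inj[OF bij_II]])
  then have lin_inv: "linear (inv II)" by (rule bounded_linear.linear)
  have dm': "((\<lambda>s. II (\<omega> s)) has_vector_derivative M) (at t)"
    using dm by (simp add: M_def lam_def mw_def f_def)
  have dw: "(\<omega> has_vector_derivative inv II M) (at t)"
    using bounded_linear.has_vector_derivative[OF bl_inv dm'] by (simp add: inv_f_f[OF bij_is_inj[OF bij_II]])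
  have on_H: "orthonormal_on f {1..k}"
    using orthonormal_on_subset[OF on_t] k by auto
  have M_D: "inner (M - mw) (f j) = 0" if "j \<in> D" for j
    using inner_sum_orthonormal[OF on_t _ _ D_sub[THEN subsetD, OF that], of "{1..k}" lam] k that
    by (simp add: M_def D_def)
  have W_H: "inner (inv II M) (f j) = 0" if "j \<in> H" for j
    using inner_constraint_multipliers[OF lin_inv mat_inv_k_gram[OF lin_inv
          positive_definite_inv[OF II_lin II_pos] on_H], of j mw] that
    by (simp add: H_eq M_def lam_def inner_commute)
  have "((\<lambda>s. frame_proj (\<lambda>i. e i s) D (II (\<omega> s)) + frame_proj (\<lambda>i. e i s) H (\<omega> s))
      has_vector_derivative
        \<epsilon> *\<^sub>R br (frame_proj (\<lambda>i. e i t) D (II (\<omega> t)) + frame_proj (\<lambda>i. e i t) H (\<omega> t)) (\<omega> t) +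
        (1 - \<epsilon>) *\<^sub>R frame_proj (\<lambda>i. e i t) D (br (II (\<omega> t)) (\<omega> t))) (at t)"
    using M_D W_H de D_sub
    by (intro has_vector_derivative_split_momentum[OF lie dm' dw])
      (auto simp: f_def mw_def H_def)
  then show ?thesis
    unfolding D_def[symmetric] proj_H[OF t] unfolding proj_D[OF t]
    by (rule has_vector_derivative_transform_within_open[OF _ T t]) (metis proj_H proj_D)
qed

theorem proposition2:
  fixes br :: "'g::euclidean_space \<Rightarrow> 'g \<Rightarrow> 'g"
    and II :: "'g \<Rightarrow> 'g"
    and \<epsilon> :: real
    and E :: "nat \<Rightarrow> 'g"
    and k :: nat
    and T :: "real set"
    and \<omega> :: "real \<Rightarrow> 'g"
    and e :: "nat \<Rightarrow> real \<Rightarrow> 'g"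
  assumes lie: "inv_lie_algebra br"
    and II_lin: "linear II"
    and II_sym: "\<forall>x y. inner (II x) y = inner x (II y)"
    and II_pos: "\<forall>x. x \<noteq> 0 \<longrightarrow> inner (II x) x > 0"
    and E_on: "\<forall>i\<in>{1..DIM('g)}. \<forall>j\<in>{1..DIM('g)}.
                  inner (E i) (E j) = (if i = j then 1 else 0)"
    and k: "1 \<le> k" "k < DIM('g)"
    and T: "open T"
    and in_M: "\<forall>t\<in>T. (\<forall>i\<in>{1..DIM('g)}. e i t \<in> adj_orbit br (E i)) \<and>
                 (\<forall>i\<in>{1..DIM('g)}. \<forall>j\<in>{1..DIM('g)}.
                    inner (e i t) (e j t) = (if i = j then 1 else 0))"
    and m_eq: "\<forall>t\<in>T. ((\<lambda>s. II (\<omega> s)) has_vector_derivative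
                 (br (II (\<omega> t)) (\<omega> t) +
                  (\<Sum>i=1..k. (- (\<Sum>j=1..k.
                      inner (e j t) (inv II (br (II (\<omega> t)) (\<omega> t))) *
                      mat_inv_k k (\<lambda>a b. inner (e a t) (inv II (e b t))) i j)) *\<^sub>R e i t)))
                 (at t)"
    and e_eq: "\<forall>t\<in>T. \<forall>i\<in>{1..DIM('g)}.
                 (e i has_vector_derivative (\<epsilon> *\<^sub>R br (e i t) (\<omega> t))) (at t)"
  shows "\<forall>t\<in>T.
     (let prD = orth_proj (span ((\<lambda>i. e i t) ` {k+1..DIM('g)}));
          prH = (\<lambda>x. x - prD x);
          J = (\<lambda>x. prD (II x) + prH x)
      in bij J \<and> \<omega> t = inv J (J (\<omega> t))) \<and>
     ((\<lambda>s. let prD = orth_proj (span ((\<lambda>i. e i s) ` {k+1..DIM('g)}))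
            in prD (II (\<omega> s)) + (\<omega> s - prD (\<omega> s)))
        has_vector_derivative
        (let prD = orth_proj (span ((\<lambda>i. e i t) ` {k+1..DIM('g)}));
             mb = prD (II (\<omega> t)) + (\<omega> t - prD (\<omega> t))
         in \<epsilon> *\<^sub>R br mb (\<omega> t) + (1 - \<epsilon>) *\<^sub>R prD (br (II (\<omega> t)) (\<omega> t)))) (at t) \<and>
     (\<forall>i\<in>{k+1..DIM('g)}. (e i has_vector_derivative (\<epsilon> *\<^sub>R br (e i t) (\<omega> t))) (at t)) \<and>
     (\<forall>i\<in>{k+1..DIM('g)}. e i t \<in> adj_orbit br (E i)) \<and>
     (\<forall>i\<in>{k+1..DIM('g)}. \<forall>j\<in>{k+1..DIM('g)}.
        inner (e i t) (e j t) = (if i = j then 1 else 0))"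
proof -
  have on: "\<forall>s\<in>T. orthonormal_on (\<lambda>i. e i s) {1..DIM('g)}"
    using in_M unfolding orthonormal_on_def by blast
  have on_D: "orthonormal_on (\<lambda>i. e i t) {k+1..DIM('g)}" if "t \<in> T" for t
    using orthonormal_on_subset[OF on[rule_format, OF that]] by auto
  note bij_J = bij_momentum_map[OF II_lin II_pos on_D finite_atLeastAtMost]
  show ?thesis
    unfolding Let_def
    by (intro ballI conjI momentum_has_vector_derivative[OF lie II_lin II_pos _ T _ on])
      (use bij_J bij_J[THEN bij_is_inj, THEN inv_f_f] in_M e_eq m_eq k in auto)
qed

end
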